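(* Let $\mathcal{Q}=\left(\frac{\lambda,\ \mu}{F}\right)$ be a generalized quaternion algebra and let $A,B\in\mathcal{Q}$ be invertible quaternions that do not commute. If $A,B$ is a matching pair (i.e. $\mathrm{tr}(A)=N(A)\neq 0$ and $A\cdot B=0$), then $A,B$ satisfy the fundamental equation $$A^{-1}B^{-1}AB-BA^{-1}B^{-1}A=B^{-1}AB-A.$$ If moreover $\mathcal{Q}$ is anisotropic, then conversely every pair of invertible, non-commuting $A,B\in\mathcal{Q}$ satisfying the fundamental equation is a matching pair; i.e. in the anisotropic case being a matching pair is necessary and sufficient.
   Context: $F$ is a field of characteristic not $2$, and $\lambda,\mu\in F$ are nonzero. The generalized quaternion algebra $\left(\frac{\lambda,\ \mu}{F}\right)$ is the $4$-dimensional associative $F$-algebra with basis $1,i,j,k$ and relations $i^2=\lambda$, $j^2=\mu$, $ij=-ji=k$. For $A=a_0+a_1i+a_2j+a_3k$ the conjugate is $\overline{A}=a_0-a_1i-a_2j-a_3k$, the norm is $N(A)=A\overline{A}=a_0^2-\lambda a_1^2-\mu a_2^2+\lambda\mu a_3^2\in F$, and the trace is $\mathrm{tr}(A)=A+\overline{A}=2a_0$. The bilinear form is $A\cdot B=\tfrac12(A\overline{B}+B\overline{A})=a_0b_0-\lambda a_1b_1-\mu a_2b_2+\lambda\mu a_3b_3$. A nonzero element $X$ is isotropic if $N(X)=0$; the algebra is anisotropic if it has no isotropic elements. A quaternion $A$ is balanced if $\mathrm{tr}(A)=N(A)\neq 0$; a pair of invertible non-commuting quaternions $A,B$ is a matching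 pair if $A$ is balanced and $A\cdot B=0$. *)

theory Defs
  imports Main
begin

text \<open>Generalized quaternion algebra (lam, mu / F): elements a0 + a1 i + a2 j + a3 k
  with i^2 = lam, j^2 = mu, ij = -ji = k. The structure constants lam, mu are passed
  explicitly to the multiplication.\<close>

datatype 'a quat = Quat (q0: 'a) (q1: 'a) (q2: 'a) (q3: 'a)

definition qone :: "'a::field quat" where
  "qone = Quat 1 0 0 0"

definition qzero :: "'a::field quat" where
  "qzero = Quat 0 0 0 0"

definition qadd :: "'a::field quat \<Rightarrow> 'a quat \<Rightarrow> 'a quat" where
  "qadd A B = Quat (q0 A + q0 B) (q1 A + q1 B) (q2 A + q2 B) (q3 A + q3 B)"

definition qsub :: "'a::field quat \<Rightarrow> 'a quat \<Rightarrow> 'a quat" where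
  "qsub A B = Quat (q0 A - q0 B) (q1 A - q1 B) (q2 A - q2 B) (q3 A - q3 B)"

text \<open>Multiplication derived from i^2 = lam, j^2 = mu, k = ij = -ji
  (hence k^2 = -lam mu, ik = lam j, ki = -lam j, jk = -mu i, kj = mu i).\<close>
definition qmul :: "'a::field \<Rightarrow> 'a \<Rightarrow> 'a quat \<Rightarrow> 'a quat \<Rightarrow> 'a quat" where
  "qmul lam mu A B = Quat
     (q0 A * q0 B + lam * q1 A * q1 B + mu * q2 A * q2 B - lam * mu * q3 A * q3 B)
     (q0 A * q1 B + q1 A * q0 B - mu * q2 A * q3 B + mu * q3 A * q2 B)
     (q0 A * q2 B + q2 A * q0 B + lam * q1 A * q3 B - lam * q3 A * q1 B)
     (q0 A * q3 B + q3 A * q0 B + q1 A * q2 B - q2 A * q1 B)"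

definition qconj :: "'a::field quat \<Rightarrow> 'a quat" where
  "qconj A = Quat (q0 A) (- q1 A) (- q2 A) (- q3 A)"

definition qnorm :: "'a::field \<Rightarrow> 'a \<Rightarrow> 'a quat \<Rightarrow> 'a" where
  "qnorm lam mu A = q0 A ^ 2 - lam * q1 A ^ 2 - mu * q2 A ^ 2 + lam * mu * q3 A ^ 2"

definition qtrace :: "'a::field quat \<Rightarrow> 'a" where
  "qtrace A = 2 * q0 A"

definition qdot :: "'a::field \<Rightarrow> 'a \<Rightarrow> 'a quat \<Rightarrow> 'a quat \<Rightarrow> 'a" where
  "qdot lam mu A B = q0 A * q0 B - lam * q1 A * q1 B - mu * q2 A * q2 B + lam * mu * q3 A * q3 B"

definition qinvertible :: "'a::field \<Rightarrow> 'a \<Rightarrow> 'a quat \<Rightarrow> bool" where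
  "qinvertible lam mu A \<longleftrightarrow> (\<exists>C. qmul lam mu A C = qone \<and> qmul lam mu C A = qone)"

definition qinv :: "'a::field \<Rightarrow> 'a \<Rightarrow> 'a quat \<Rightarrow> 'a quat" where
  "qinv lam mu A = (SOME C. qmul lam mu A C = qone \<and> qmul lam mu C A = qone)"

definition anisotropic :: "'a::field \<Rightarrow> 'a \<Rightarrow> bool" where
  "anisotropic lam mu \<longleftrightarrow> (\<forall>X. X \<noteq> qzero \<longrightarrow> qnorm lam mu X \<noteq> 0)"

definition balanced :: "'a::field \<Rightarrow> 'a \<Rightarrow> 'a quat \<Rightarrow> bool" where
  "balanced lam mu A \<longleftrightarrow> qtrace A = qnorm lam mu A \<and> qnorm lam mu A \<noteq> 0"

definition matching_pair :: "'a::field \<Rightarrow> 'a \<Rightarrow> 'a quat \<Rightarrow> 'a quat \<Rightarrow> bool" where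
  "matching_pair lam mu A B \<longleftrightarrow>
     qinvertible lam mu A \<and> qinvertible lam mu B \<and> qmul lam mu A B \<noteq> qmul lam mu B A \<and>
     balanced lam mu A \<and> qdot lam mu A B = 0"

definition fundamental_eq :: "'a::field \<Rightarrow> 'a \<Rightarrow> 'a quat \<Rightarrow> 'a quat \<Rightarrow> bool" where
  "fundamental_eq lam mu A B \<longleftrightarrow>
     (let m = qmul lam mu; Ai = qinv lam mu A; Bi = qinv lam mu B in
      qsub (m (m (m Ai Bi) A) B) (m (m (m B Ai) Bi) A) = qsub (m (m Bi A) B) A)"

end

theory Submission
  imports Defs
begin

text \<open>Since \<open>A\<inverse> = conj A / N(A)\<close>, clearing denominators turns the fundamental equation
  into \<open>conj A conj B A B - B conj A conj B A - N(A) (conj B A B - N(B) A) = 0\<close>, and the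
  left-hand side factors as \<open>((tr A - N A) conj B - 2 (A\<cdot>B)) (AB - BA)\<close>. Unless \<open>B\<close> is a
  scalar, which would make it commute with \<open>A\<close>, the first factor vanishes exactly when
  \<open>tr A = N A\<close> and \<open>A\<cdot>B = 0\<close>. In an anisotropic algebra the norm is multiplicative and vanishes
  only at \<open>0\<close>, so there are no zero divisors; as \<open>AB - BA \<noteq> 0\<close>, the fundamental equation then
  forces the first factor to vanish.\<close>

notation qsub (infixl "\<ominus>" 65)

definition qscale :: "'a::field \<Rightarrow> 'a quat \<Rightarrow> 'a quat" where
  "qscale c A = Quat (c * q0 A) (c * q1 A) (c * q2 A) (c * q3 A)"

lemma qscale_qscale [simp]: "qscale c (qscale d A) = qscale (c * d) A"
  by (simp add: qscale_def)

lemma qscale_qsub: "qscale c (X \<ominus> Y) = qscale c X \<ominus> qscale c Y"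
  by (simp add: qscale_def qsub_def algebra_simps)

lemma qscale_cancel:
  assumes "c \<noteq> 0"
  shows "qscale c X = qscale c Y \<longleftrightarrow> X = Y"
  using assms by (cases X; cases Y) (simp add: qscale_def)

lemma qsub_eq_qzero_iff: "X \<ominus> Y = qzero \<longleftrightarrow> X = Y"
  by (cases X; cases Y) (simp add: qsub_def qzero_def)

lemma qscale_one [simp]: "qscale 1 A = A"
  by (simp add: qscale_def)

context
  fixes lam mu :: "'a::field"
begin

abbreviation qmult :: "'a quat \<Rightarrow> 'a quat \<Rightarrow> 'a quat" (infixl "\<odot>" 70) where
  "A \<odot> B \<equiv> qmul lam mu A B"

lemma qmul_assoc: "A \<odot> B \<odot> C = A \<odot> (B \<odot> C)"
  by (simp add: qmul_def algebra_simps)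

lemma qmul_qone_left [simp]: "qone \<odot> A = A"
  by (simp add: qmul_def qone_def)

lemma qmul_qone_right [simp]: "A \<odot> qone = A"
  by (simp add: qmul_def qone_def)

lemma qmul_qzero_left [simp]: "qzero \<odot> A = qzero"
  by (simp add: qmul_def qzero_def)

lemma qmul_qzero_right [simp]: "A \<odot> qzero = qzero"
  by (simp add: qmul_def qzero_def)

lemma qscale_qmul_left [simp]: "qscale c A \<odot> B = qscale c (A \<odot> B)"
  by (simp add: qmul_def qscale_def algebra_simps)

lemma qscale_qmul_right [simp]: "A \<odot> qscale c B = qscale c (A \<odot> B)"
  by (simp add: qmul_def qscale_def algebra_simps)

lemma qnorm_qmul: "qnorm lam mu (A \<odot> B) = qnorm lam mu A * qnorm lam mu B"
  by (simp add: qnorm_def qmul_def power2_eq_square algebra_simps)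

lemma qnorm_qone [simp]: "qnorm lam mu qone = 1"
  by (simp add: qnorm_def qone_def)

lemma qnorm_qzero [simp]: "qnorm lam mu qzero = 0"
  by (simp add: qnorm_def qzero_def)

lemma qmul_qconj_right: "A \<odot> qconj A = qscale (qnorm lam mu A) qone"
  by (simp add: qmul_def qconj_def qnorm_def qscale_def qone_def power2_eq_square)

lemma qmul_qconj_left: "qconj A \<odot> A = qscale (qnorm lam mu A) qone"
  by (simp add: qmul_def qconj_def qnorm_def qscale_def qone_def power2_eq_square algebra_simps)

lemma qinvertible_iff_qnorm_nonzero: "qinvertible lam mu A \<longleftrightarrow> qnorm lam mu A \<noteq> 0"
proof
  assume "qinvertible lam mu A"
  then obtain C where "A \<odot> C = qone"
    unfolding qinvertible_def by blast
  then have "qnorm lam mu A * qnorm lam mu C = 1"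
    by (metis qnorm_qmul qnorm_qone)
  then show "qnorm lam mu A \<noteq> 0"
    by auto
next
  assume "qnorm lam mu A \<noteq> 0"
  then show "qinvertible lam mu A"
    unfolding qinvertible_def
    by (intro exI[of _ "qscale (inverse (qnorm lam mu A)) (qconj A)"])
      (simp add: qmul_qconj_left qmul_qconj_right)
qed

lemma qinv_eq_scaled_qconj:
  assumes "qnorm lam mu A \<noteq> 0"
  shows "qinv lam mu A = qscale (inverse (qnorm lam mu A)) (qconj A)"
proof -
  define D where "D = qscale (inverse (qnorm lam mu A)) (qconj A)"
  have D: "A \<odot> D = qone" "D \<odot> A = qone"
    using assms by (simp_all add: D_def qmul_qconj_left qmul_qconj_right)
  have inv: "A \<odot> qinv lam mu A = qone \<and> qinv lam mu A \<odot> A = qone"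
    unfolding qinv_def by (rule someI[of _ D]) (simp add: D)
  have "qinv lam mu A = D \<odot> A \<odot> qinv lam mu A"
    by (simp add: D)
  also have "\<dots> = D \<odot> (A \<odot> qinv lam mu A)"
    by (rule qmul_assoc)
  also have "\<dots> = D"
    using inv by simp
  finally show ?thesis
    unfolding D_def .
qed

definition matching_factor :: "'a quat \<Rightarrow> 'a quat \<Rightarrow> 'a quat" where
  "matching_factor A B =
     qscale (qtrace A - qnorm lam mu A) (qconj B) \<ominus> qscale (2 * qdot lam mu A B) qone"

lemma fundamental_eq_cleared_factorization:
  "qconj A \<odot> qconj B \<odot> A \<odot> B \<ominus> B \<odot> qconj A \<odot> qconj B \<odot> A
     \<ominus> (qscale (qnorm lam mu A) (qconj B \<odot> A \<odot> B) \<ominus> qscale (qnorm lam mu A * qnorm lam mu B) A)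
   = matching_factor A B \<odot> (A \<odot> B \<ominus> B \<odot> A)"
  by (cases A; cases B)
    (simp add: matching_factor_def qmul_def qsub_def qscale_def qconj_def qnorm_def qtrace_def
      qdot_def qone_def algebra_simps power2_eq_square)

lemma fundamental_eq_iff_matching_factor:
  assumes "qinvertible lam mu A" and "qinvertible lam mu B"
  shows "fundamental_eq lam mu A B \<longleftrightarrow> matching_factor A B \<odot> (A \<odot> B \<ominus> B \<odot> A) = qzero"
proof -
  have A: "qnorm lam mu A \<noteq> 0" and B: "qnorm lam mu B \<noteq> 0"
    using assms by (simp_all add: qinvertible_iff_qnorm_nonzero)
  define c where "c = qnorm lam mu A * qnorm lam mu B"
  define P where "P = qconj A \<odot> qconj B \<odot> A \<odot> B \<ominus> B \<odot> qconj A \<odot> qconj B \<odot> A"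
  define Q where "Q = qconj B \<odot> A \<odot> B"
  have "c \<noteq> 0"
    using A B by (simp add: c_def)
  have "fundamental_eq lam mu A B \<longleftrightarrow>
      qscale (inverse c) P = qscale (inverse (qnorm lam mu B)) Q \<ominus> A"
    by (simp add: fundamental_eq_def Let_def qinv_eq_scaled_qconj A B P_def Q_def c_def
        qscale_qsub mult.commute)
  also have "\<dots> \<longleftrightarrow>
      qscale c (qscale (inverse c) P) = qscale c (qscale (inverse (qnorm lam mu B)) Q \<ominus> A)"
    using \<open>c \<noteq> 0\<close> by (rule qscale_cancel[symmetric])
  also have "\<dots> \<longleftrightarrow> P = qscale (qnorm lam mu A) Q \<ominus> qscale c A"
    using \<open>c \<noteq> 0\<close> B by (simp add: qscale_qsub c_def field_simps)
  also have "\<dots> \<longleftrightarrow> P \<ominus> (qscale (qnorm lam mu A) Q \<ominus> qscale c A) = qzero"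
    by (simp add: qsub_eq_qzero_iff)
  finally show ?thesis
    unfolding P_def Q_def c_def fundamental_eq_cleared_factorization .
qed

lemma matching_factor_eq_qzero_iff:
  assumes "(2::'a) \<noteq> 0" and "A \<odot> B \<noteq> B \<odot> A"
  shows "matching_factor A B = qzero \<longleftrightarrow> qtrace A = qnorm lam mu A \<and> qdot lam mu A B = 0"
proof (cases "qtrace A = qnorm lam mu A")
  case True
  then show ?thesis
    using assms(1) by (simp add: matching_factor_def qscale_def qsub_def qone_def qzero_def)
next
  case False
  have "matching_factor A B \<noteq> qzero"
  proof
    assume "matching_factor A B = qzero"
    then have "q1 B = 0" "q2 B = 0" "q3 B = 0"
      using False by (simp_all add: matching_factor_def qscale_def qsub_def qconj_def qone_def
          qzero_def)
    then have "A \<odot> B = B \<odot> A"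
      by (simp add: qmul_def)
    with assms(2) show False ..
  qed
  with False show ?thesis
    by blast
qed

lemma matching_pair_iff_matching_factor:
  assumes "(2::'a) \<noteq> 0" and "A \<odot> B \<noteq> B \<odot> A"
  shows "matching_pair lam mu A B \<longleftrightarrow>
    qinvertible lam mu A \<and> qinvertible lam mu B \<and> matching_factor A B = qzero"
  using matching_factor_eq_qzero_iff[OF assms] assms(2)
  by (auto simp: matching_pair_def balanced_def qinvertible_iff_qnorm_nonzero)

lemma anisotropic_qmul_eq_qzero_iff:
  assumes "anisotropic lam mu"
  shows "X \<odot> Y = qzero \<longleftrightarrow> X = qzero \<or> Y = qzero"
proof
  assume "X \<odot> Y = qzero"
  then have "qnorm lam mu X * qnorm lam mu Y = 0"
    by (metis qnorm_qmul qnorm_qzero)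
  with assms show "X = qzero \<or> Y = qzero"
    unfolding anisotropic_def by auto
qed auto

end

theorem theorem4p4:
  fixes lam mu :: "'a::field"
  assumes char: "(2::'a) \<noteq> 0"
    and lam: "lam \<noteq> 0" and mu: "mu \<noteq> 0"
  shows "(\<forall>A B. qinvertible lam mu A \<and> qinvertible lam mu B \<and>
                qmul lam mu A B \<noteq> qmul lam mu B A \<and> matching_pair lam mu A B
                \<longrightarrow> fundamental_eq lam mu A B)
       \<and> (anisotropic lam mu \<longrightarrow>
            (\<forall>A B. qinvertible lam mu A \<and> qinvertible lam mu B \<and>
                   qmul lam mu A B \<noteq> qmul lam mu B A
                   \<longrightarrow> (matching_pair lam mu A B \<longleftrightarrow> fundamental_eq lam mu A B)))"
proof (intro conjI allI impI)
  fix A B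
  assume "qinvertible lam mu A \<and> qinvertible lam mu B \<and>
    qmul lam mu A B \<noteq> qmul lam mu B A \<and> matching_pair lam mu A B"
  then show "fundamental_eq lam mu A B"
    by (auto simp: matching_pair_iff_matching_factor[OF char] fundamental_eq_iff_matching_factor)
next
  fix A B
  assume aniso: "anisotropic lam mu"
    and "qinvertible lam mu A \<and> qinvertible lam mu B \<and> qmul lam mu A B \<noteq> qmul lam mu B A"
  then show "matching_pair lam mu A B \<longleftrightarrow> fundamental_eq lam mu A B"
    by (auto simp: matching_pair_iff_matching_factor[OF char] fundamental_eq_iff_matching_factor
        anisotropic_qmul_eq_qzero_iff[OF aniso] qsub_eq_qzero_iff)
qed

end
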